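(* Let $y_1,y_2,\dots$ be i.i.d. $\mathcal{N}(\phi_0,1)$ with true value $\phi_0=0$, and let the prior on $\phi$ be the HTHS prior or the HTHS+ prior (defined in the context). Let $R_n(0)$ be the Cesàro-average Bayes predictive risk (defined in the context). Then for any $a>0$ there is a constant $C_a^0>0$ such that $$R_n(0)\le a\,\frac{\log n}{n}+\frac{1}{n}\left(1+\frac{1}{a\,C_a^0}\right).$$
   Context: The HTHS prior on $\phi\in\mathbb{R}$: $\phi\mid\gamma\sim\mathcal{N}(0,1/\gamma)$, with $\gamma$ having density $\frac{1}{\gamma\left((\log\gamma)^2+\pi^2\right)}$ on $(0,\infty)$. The HTHS+ prior: $\phi\mid\gamma\sim\mathcal{N}(0,1/\gamma)$ with $\gamma$ having density $\frac{2}{\gamma\left((\log\gamma)^2+4\pi^2\right)}$ on $(0,\infty)$. Let $f(y\mid\phi)$ denote the $\mathcal{N}(\phi,1)$ density and $L(f_1,f_2)=\int f_1\log(f_1/f_2)$ the Kullback–Leibler divergence. For $j\ge1$, let $\hat f_j(y)=\int f(y\mid\phi)\,\pi(\mathrm{d}\phi\mid y_1,\dots,y_{j-1})$ be the Bayes posterior predictive density after $j-1$ observations (with $\hat f_1$ the prior predictive). The Cesàro-average Bayes predictive risk is $R_n(\phi_0)=\frac{1}{n}\sum_{j=1}^n \mathbb{E}_{\phi_0}\big[L(f(\cdot\mid\phi_0),\hat f_j)\big]$. *)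

theory Defs
  imports "HOL-Probability.Probability"
begin

definition hths_gamma_dens :: "real \<Rightarrow> real" where
  "hths_gamma_dens g = 1 / (g * ((ln g)\<^sup>2 + pi\<^sup>2))"

definition hths_plus_gamma_dens :: "real \<Rightarrow> real" where
  "hths_plus_gamma_dens g = 2 / (g * ((ln g)\<^sup>2 + 4 * pi\<^sup>2))"

definition scale_mix_prior :: "(real \<Rightarrow> real) \<Rightarrow> real \<Rightarrow> real" where
  "scale_mix_prior dg phi =
     (\<integral>g\<in>{0<..}. dg g * normal_density 0 (1 / sqrt g) phi \<partial>lborel)"

definition hths_prior :: "real \<Rightarrow> real" where
  "hths_prior = scale_mix_prior hths_gamma_dens"

definition hths_plus_prior :: "real \<Rightarrow> real" where
  "hths_plus_prior = scale_mix_prior hths_plus_gamma_dens"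

text \<open>Bayes posterior predictive density after observing ys 0, ..., ys (m-1)
  (m = 0 gives the prior predictive); the model is y | phi ~ N(phi,1).\<close>
definition pred_dens :: "(real \<Rightarrow> real) \<Rightarrow> nat \<Rightarrow> (nat \<Rightarrow> real) \<Rightarrow> real \<Rightarrow> real" where
  "pred_dens pri m ys y =
     (\<integral>phi. pri phi * (\<Prod>i<m. normal_density phi 1 (ys i)) * normal_density phi 1 y \<partial>lborel)
     / (\<integral>phi. pri phi * (\<Prod>i<m. normal_density phi 1 (ys i)) \<partial>lborel)"

definition KL_div :: "(real \<Rightarrow> real) \<Rightarrow> (real \<Rightarrow> real) \<Rightarrow> real" where
  "KL_div f1 f2 = (\<integral>y. f1 y * ln (f1 y / f2 y) \<partial>lborel)"

definition cesaro_risk :: "(real \<Rightarrow> real) \<Rightarrow> real \<Rightarrow> nat \<Rightarrow> real" where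
  "cesaro_risk pri phi0 n =
     (1 / real n) * (\<Sum>j\<in>{1..n}.
        \<integral>ys. KL_div (normal_density phi0 1) (pred_dens pri (j - 1) ys)
          \<partial>(PiM {..<j - 1} (\<lambda>_. density lborel (normal_density phi0 1))))"

end

theory Submission
  imports Defs
begin

text \<open>
  Let m_k be the marginal likelihood of the first k observations, so that the predictive
  density after k observations is m_(k+1) / m_k. By the chain rule the expected KL risks
  telescope: n R_n(0) = E ln (f_0(y_1) ... f_0(y_n) / m_n(y)) + ln m_0. Under phi_0 = 0 the
  likelihood ratio of phi against 0 is exp (phi S - n phi^2 / 2), S = y_1 + ... + y_n;
  symmetrised in phi it is cosh (phi S) exp (- n phi^2 / 2), which is at least exp (-1/2) when
  phi^2 <= 1 / (n + 1). As the prior is even, m_n >= beta_n f_0(y_1) ... f_0(y_n), where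
  beta_n = exp (-1/2) b d, d = (n + 1)^(-1/2), and b bounds the prior density from below on
  0 < |phi| <= d. Both priors are normal scale mixtures with a log-Cauchy mixing density, whose
  tail 1 / (gamma (ln gamma)^2) makes the prior density at phi = gamma^(-1/2) at least of order
  gamma^(1/2) / (ln gamma)^2. Hence - ln beta_n = O(ln ln n), which is below a ln n + const for
  every a > 0.
\<close>

text \<open>The density of \<open>exp X\<close> for \<open>X\<close> Cauchy with scale \<open>c\<close>.\<close>

definition log_cauchy_density :: "real \<Rightarrow> real \<Rightarrow> real" where
  "log_cauchy_density c g = (c / pi) / (g * ((ln g)\<^sup>2 + c\<^sup>2))"

lemma hths_gamma_dens_eq: "hths_gamma_dens = log_cauchy_density pi"
  by (auto simp: fun_eq_iff hths_gamma_dens_def log_cauchy_density_def)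

lemma hths_plus_gamma_dens_eq: "hths_plus_gamma_dens = log_cauchy_density (2 * pi)"
  by (auto simp: fun_eq_iff hths_plus_gamma_dens_def log_cauchy_density_def power_mult_distrib)

lemma log_cauchy_density_nonneg: "c > 0 \<Longrightarrow> g > 0 \<Longrightarrow> 0 \<le> log_cauchy_density c g"
  by (simp add: log_cauchy_density_def add_nonneg_pos)

lemma has_real_derivative_arctan_ln:
  assumes "c > 0" "g > 0"
  shows "((\<lambda>g. arctan (ln g / c) / pi) has_real_derivative log_cauchy_density c g) (at g)"
proof -
  have "((\<lambda>g. arctan (ln g / c) / pi) has_real_derivative
          inverse (1 + (ln g / c)\<^sup>2) * (inverse g / c) / pi) (at g)"
    using assms by (auto intro!: derivative_eq_intros simp: divide_inverse)
  moreover have "inverse (1 + (ln g / c)\<^sup>2) * (inverse g / c) / pi = log_cauchy_density c g"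
    using assms by (simp add: log_cauchy_density_def field_simps power2_eq_square)
  ultimately show ?thesis by simp
qed

lemma set_integrable_log_cauchy_density:
  assumes c: "c > 0"
  shows "set_integrable lborel {0<..} (log_cauchy_density c)"
proof -
  let ?F = "\<lambda>g. arctan (ln g / c) / pi"
  have ln_div_c: "filterlim (\<lambda>g. ln g / c) at_bot (at_right 0)"
                 "filterlim (\<lambda>g. ln g / c) at_top at_top"
    using c by (auto intro!: filterlim_tendsto_pos_mult_at_bot[OF tendsto_const _ ln_at_0]
                  filterlim_tendsto_pos_mult_at_top[OF tendsto_const _ ln_at_top]
                 simp: divide_inverse mult.commute[of "ln _"])
  have "set_integrable lborel (einterval 0 \<infinity>) (log_cauchy_density c)"
  proof (rule interval_integral_FTC_nonneg(1)[where F = ?F and A = "-1/2" and B = "1/2"])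
    fix x assume "0 < ereal x" "ereal x < \<infinity>"
    then have "x > 0" by simp
    then show "(?F has_real_derivative log_cauchy_density c x) (at x)"
      by (rule has_real_derivative_arctan_ln[OF c])
    show "isCont (log_cauchy_density c) x"
      using \<open>x > 0\<close> c unfolding log_cauchy_density_def
      by (auto intro!: continuous_intros simp: add_pos_nonneg)
  next
    show "AE x in lborel. 0 < ereal x \<longrightarrow> ereal x < \<infinity> \<longrightarrow> 0 \<le> log_cauchy_density c x"
      using c by (auto intro!: log_cauchy_density_nonneg)
    show "((?F \<circ> real_of_ereal) \<longlongrightarrow> -1/2) (at_right 0)"
      unfolding zero_ereal_def ereal_tendsto_simps
      using tendsto_divide[OF filterlim_compose[OF tendsto_arctan_at_bot ln_div_c(1)] tendsto_const, of pi]
      by simp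
    show "((?F \<circ> real_of_ereal) \<longlongrightarrow> 1/2) (at_left \<infinity>)"
      unfolding ereal_tendsto_simps
      using tendsto_divide[OF filterlim_compose[OF tendsto_arctan_at_top ln_div_c(2)] tendsto_const, of pi]
      by simp
  qed simp
  moreover have "einterval 0 \<infinity> = {0<..}" by (auto simp: einterval_def)
  ultimately show ?thesis by simp
qed

lemma borel_measurable_scale_mix_prior[measurable]:
  assumes [measurable]: "dg \<in> borel_measurable borel"
  shows "scale_mix_prior dg \<in> borel_measurable borel"
  unfolding scale_mix_prior_def set_lebesgue_integral_def normal_density_def by measurable

lemma scale_mix_prior_nonneg:
  assumes "\<And>g. g > 0 \<Longrightarrow> 0 \<le> dg g"
  shows "0 \<le> scale_mix_prior dg phi"
  unfolding scale_mix_prior_def set_lebesgue_integral_def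
  using assms by (intro integral_nonneg_AE) (auto simp: indicator_def)

lemma scale_mix_prior_minus: "scale_mix_prior dg (- phi) = scale_mix_prior dg phi"
  by (simp add: scale_mix_prior_def normal_density_def)

lemma normal_density_precision:
  "g > 0 \<Longrightarrow> normal_density 0 (1 / sqrt g) phi = sqrt g / sqrt (2 * pi) * exp (- g * phi\<^sup>2 / 2)"
  by (simp add: normal_density_def power_divide real_sqrt_divide real_sqrt_mult field_simps)

lemma normal_density_precision_le:
  assumes g: "g > 0" and phi: "phi \<noteq> 0"
  shows "normal_density 0 (1 / sqrt g) phi \<le> 1 / \<bar>phi\<bar>"
proof -
  define x where "x = sqrt g * \<bar>phi\<bar>"
  have "x \<le> 1 + x\<^sup>2 / 2"
    using sum_power2_ge_zero[of "x - 1" 0] by (simp add: power2_diff)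
  also have "\<dots> \<le> exp (x\<^sup>2 / 2)" by (rule exp_ge_add_one_self)
  also have "x\<^sup>2 = g * phi\<^sup>2" unfolding x_def using g by (simp add: power_mult_distrib)
  finally have "sqrt g * exp (- g * phi\<^sup>2 / 2) \<le> 1 / \<bar>phi\<bar>"
    using phi unfolding x_def by (simp add: exp_minus field_simps)
  moreover have "1 \<le> sqrt (2 * pi)" using pi_gt3 by (simp add: real_le_rsqrt)
  ultimately have "sqrt g * exp (- g * phi\<^sup>2 / 2) / sqrt (2 * pi) \<le> (1 / \<bar>phi\<bar>) / 1"
    using phi by (intro frac_le) auto
  then show ?thesis by (simp add: normal_density_precision[OF g])
qed

lemma set_integrable_scale_mix_integrand:
  assumes [measurable]: "dg \<in> borel_measurable borel"
    and dg: "set_integrable lborel {0<..} dg" "\<And>g. g > 0 \<Longrightarrow> 0 \<le> dg g"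
    and phi: "phi \<noteq> 0"
  shows "set_integrable lborel {0<..} (\<lambda>g. dg g * normal_density 0 (1 / sqrt g) phi)"
proof (rule set_integrable_bound)
  show "set_integrable lborel {0<..} (\<lambda>g. dg g * (1 / \<bar>phi\<bar>))"
    using dg(1) by (rule set_integrable_mult_left)
  show "set_borel_measurable lborel {0<..} (\<lambda>g. dg g * normal_density 0 (1 / sqrt g) phi)"
    unfolding set_borel_measurable_def normal_density_def by measurable
  show "AE g in lborel. g \<in> {0<..} \<longrightarrow>
          norm (dg g * normal_density 0 (1 / sqrt g) phi) \<le> norm (dg g * (1 / \<bar>phi\<bar>))"
  proof (intro AE_I2 impI)
    fix g :: real assume "g \<in> {0<..}"
    then have "0 \<le> dg g" "normal_density 0 (1 / sqrt g) phi \<le> 1 / \<bar>phi\<bar>"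
      using dg(2) normal_density_precision_le[OF _ phi] by auto
    then have "dg g * normal_density 0 (1 / sqrt g) phi \<le> dg g * (1 / \<bar>phi\<bar>)"
      by (rule mult_left_mono[rotated])
    with \<open>0 \<le> dg g\<close>
    show "norm (dg g * normal_density 0 (1 / sqrt g) phi) \<le> norm (dg g * (1 / \<bar>phi\<bar>))"
      by (simp add: abs_mult normal_density_nonneg)
  qed
qed

lemma integrable_scale_mix_prior:
  assumes [measurable]: "dg \<in> borel_measurable borel"
    and dg: "set_integrable lborel {0<..} dg" "\<And>g. g > 0 \<Longrightarrow> 0 \<le> dg g"
  shows "integrable lborel (scale_mix_prior dg)"
proof (rule integrableI_nonneg)
  define h where "h = (\<lambda>phi g. indicator {0<..} g * (dg g * normal_density 0 (1 / sqrt g) phi))"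
  have h_nonneg: "0 \<le> h phi g" for phi g
    using dg(2) by (simp add: h_def indicator_def)
  have [measurable]: "(\<lambda>(phi, g). h phi g) \<in> borel_measurable (lborel \<Otimes>\<^sub>M lborel)"
    unfolding h_def normal_density_def by measurable
  have "(\<integral>\<^sup>+ phi. scale_mix_prior dg phi \<partial>lborel)
      \<le> (\<integral>\<^sup>+ phi. (\<integral>\<^sup>+ g. h phi g \<partial>lborel) \<partial>lborel)"
  proof (rule nn_integral_mono)
    fix phi
    have "scale_mix_prior dg phi = enn2real (\<integral>\<^sup>+ g. h phi g \<partial>lborel)"
      unfolding scale_mix_prior_def set_lebesgue_integral_def h_def real_scaleR_def
      by (rule integral_eq_nn_integral) (use h_nonneg in \<open>auto simp: h_def normal_density_def\<close>)
    then show "ennreal (scale_mix_prior dg phi) \<le> (\<integral>\<^sup>+ g. h phi g \<partial>lborel)"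
      by (simp add: ennreal_enn2real_if)
  qed
  also have "\<dots> = (\<integral>\<^sup>+ g. (\<integral>\<^sup>+ phi. h phi g \<partial>lborel) \<partial>lborel)"
    by (rule lborel_pair.Fubini') measurable
  also have "\<dots> = (\<integral>\<^sup>+ g. indicator {0<..} g * dg g \<partial>lborel)"
  proof (rule nn_integral_cong)
    fix g :: real
    show "(\<integral>\<^sup>+ phi. h phi g \<partial>lborel) = ennreal (indicator {0<..} g * dg g)"
    proof (cases "g > 0")
      case True
      have "(\<integral>\<^sup>+ phi. h phi g \<partial>lborel)
              = ennreal (dg g) * (\<integral>\<^sup>+ phi. normal_density 0 (1 / sqrt g) phi \<partial>lborel)"
        using True dg(2)[OF True]
        by (subst nn_integral_cmult[symmetric]) (auto simp: h_def ennreal_mult intro!: nn_integral_cong)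
      also have "(\<integral>\<^sup>+ phi. normal_density 0 (1 / sqrt g) phi \<partial>lborel) = 1"
        using True by (subst nn_integral_eq_integral[OF integrable_normal_density]) auto
      finally show ?thesis using True by simp
    qed (simp add: h_def)
  qed
  also have "\<dots> < \<infinity>"
    using dg unfolding set_integrable_def
    by (subst nn_integral_eq_integral) (auto simp: indicator_def)
  finally show "(\<integral>\<^sup>+ phi. scale_mix_prior dg phi \<partial>lborel) < \<infinity>" .
qed (use scale_mix_prior_nonneg[OF dg(2)] in auto)

lemma scale_mix_prior_ge:
  assumes [measurable]: "dg \<in> borel_measurable borel"
    and dg: "set_integrable lborel {0<..} dg" "\<And>g. g > 0 \<Longrightarrow> 0 \<le> dg g"
    and lower: "\<And>g. G \<le> g \<Longrightarrow> g \<le> 2 * G \<Longrightarrow> m \<le> dg g"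
    and G: "G > 0" and phi: "phi \<noteq> 0" "phi\<^sup>2 \<le> 1 / G"
  shows "G * m * (sqrt G / sqrt (2 * pi) * exp (- 1)) \<le> scale_mix_prior dg phi"
proof -
  define L where "L = sqrt G / sqrt (2 * pi) * exp (- 1)"
  have L_nonneg: "0 \<le> L" unfolding L_def using G by simp
  have pointwise: "indicator {G..2*G} g * (m * L)
      \<le> indicator {0<..} g * (dg g * normal_density 0 (1 / sqrt g) phi)" for g
  proof (cases "G \<le> g \<and> g \<le> 2 * G")
    case True
    then have g: "g > 0" using G by auto
    have "g * phi\<^sup>2 \<le> 2 * G * (1 / G)" using True phi(2) G by (intro mult_mono) auto
    then have "L \<le> normal_density 0 (1 / sqrt g) phi"
      unfolding L_def normal_density_precision[OF g] using True G
      by (intro mult_mono divide_right_mono) auto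
    then have "m * L \<le> dg g * normal_density 0 (1 / sqrt g) phi"
      using lower[of g] True dg(2)[OF g] L_nonneg
      by (meson mult_left_mono mult_right_mono order_trans)
    with True g show ?thesis by simp
  qed (use dg(2) in \<open>auto simp: indicator_def normal_density_def\<close>)
  have "G * (m * L) = (\<integral>g. indicator {G..2*G} g * (m * L) \<partial>lborel)"
    using G by simp
  also have "\<dots> \<le> scale_mix_prior dg phi"
    unfolding scale_mix_prior_def set_lebesgue_integral_def real_scaleR_def
    using set_integrable_scale_mix_integrand[OF _ dg phi(1)] G
    by (intro integral_mono pointwise) (auto simp: set_integrable_def emeasure_lborel_Icc)
  finally show ?thesis by (simp add: L_def mult.assoc)
qed

lemma log_cauchy_density_ge:
  assumes c: "c > 0" and G: "G \<ge> 1" and g: "G \<le> g" "g \<le> 2 * G"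
  shows "(c / pi) / (2 * G * ((ln (2 * G))\<^sup>2 + c\<^sup>2)) \<le> log_cauchy_density c g"
proof -
  have "(ln g)\<^sup>2 \<le> (ln (2 * G))\<^sup>2" using G g by (intro power_mono) auto
  then have "g * ((ln g)\<^sup>2 + c\<^sup>2) \<le> 2 * G * ((ln (2 * G))\<^sup>2 + c\<^sup>2)"
    using g by (intro mult_mono) auto
  then show ?thesis
    unfolding log_cauchy_density_def using c G g
    by (intro divide_left_mono mult_pos_pos) (auto simp: add_nonneg_pos)
qed

lemma normal_density_unit_le_one: "normal_density mu 1 x \<le> 1"
proof -
  have "exp (- (x - mu)\<^sup>2 / 2) / sqrt (2 * pi) \<le> 1 / 1"
    using pi_gt3 by (intro frac_le) (auto simp: real_le_rsqrt)
  then show ?thesis unfolding normal_density_def by simp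
qed

lemma prod_normal_density_unit_bounds:
  "0 \<le> (\<Prod>i\<in>I. normal_density phi 1 (z i))" "(\<Prod>i\<in>I. normal_density phi 1 (z i)) \<le> 1"
  by (auto intro: prod_nonneg prod_le_1 normal_density_nonneg normal_density_unit_le_one)

lemma normal_density_unit_shift:
  "normal_density phi 1 x = std_normal_density x * exp (phi * x - phi\<^sup>2 / 2)"
proof -
  have "- (x - phi)\<^sup>2 / 2 = - x\<^sup>2 / 2 + (phi * x - phi\<^sup>2 / 2)"
    by (simp add: power2_diff field_simps)
  then have "exp (- (x - phi)\<^sup>2 / 2) = exp (- x\<^sup>2 / 2) * exp (phi * x - phi\<^sup>2 / 2)"
    by (simp add: exp_add[symmetric])
  then show ?thesis unfolding normal_density_def by simp
qed

lemma prod_normal_density_shift: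
  assumes "finite I"
  shows "(\<Prod>i\<in>I. normal_density phi 1 (z i)) =
    (\<Prod>i\<in>I. std_normal_density (z i)) * exp (phi * (\<Sum>i\<in>I. z i) - real (card I) * phi\<^sup>2 / 2)"
proof -
  have "(\<Prod>i\<in>I. normal_density phi 1 (z i)) =
      (\<Prod>i\<in>I. std_normal_density (z i)) * (\<Prod>i\<in>I. exp (phi * z i - phi\<^sup>2 / 2))"
    by (subst normal_density_unit_shift) (rule prod.distrib)
  also have "(\<Prod>i\<in>I. exp (phi * z i - phi\<^sup>2 / 2)) = exp (\<Sum>i\<in>I. phi * z i - phi\<^sup>2 / 2)"
    using assms by (rule exp_sum[symmetric])
  also have "(\<Sum>i\<in>I. phi * z i - phi\<^sup>2 / 2) = phi * (\<Sum>i\<in>I. z i) - real (card I) * phi\<^sup>2 / 2"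
    by (simp add: sum_subtractf sum_distrib_left)
  finally show ?thesis .
qed

lemma prod_normal_density_symmetric_ge:
  assumes "finite I"
  shows "2 * exp (- real (card I) * phi\<^sup>2 / 2) * (\<Prod>i\<in>I. std_normal_density (z i))
    \<le> (\<Prod>i\<in>I. normal_density phi 1 (z i)) + (\<Prod>i\<in>I. normal_density (- phi) 1 (z i))"
proof -
  define t where "t = phi * (\<Sum>i\<in>I. z i)"
  define E where "E = exp (- real (card I) * phi\<^sup>2 / 2) * (\<Prod>i\<in>I. std_normal_density (z i))"
  \<comment> \<open>the symmetrised likelihood ratio is \<open>E cosh t\<close>, and \<open>cosh t \<ge> 1\<close>\<close>
  have "2 \<le> exp t + exp (- t)"
    using exp_ge_add_one_self[of t] exp_ge_add_one_self[of "- t"] by linarith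
  moreover have "0 \<le> E" unfolding E_def by (simp add: prod_nonneg normal_density_nonneg)
  ultimately have "2 * E \<le> E * (exp t + exp (- t))"
    by (simp add: mult.commute mult_left_mono)
  also have "\<dots> = (\<Prod>i\<in>I. normal_density phi 1 (z i)) + (\<Prod>i\<in>I. normal_density (- phi) 1 (z i))"
  proof -
    let ?k = "real (card I)" and ?S = "\<Sum>i\<in>I. z i"
    have "exp (phi * ?S - ?k * phi\<^sup>2 / 2) = exp (- ?k * phi\<^sup>2 / 2) * exp t"
         "exp ((- phi) * ?S - ?k * (- phi)\<^sup>2 / 2) = exp (- ?k * phi\<^sup>2 / 2) * exp (- t)"
      unfolding t_def by (simp_all only: exp_add[symmetric]) (simp_all add: algebra_simps)
    then show ?thesis
      unfolding E_def prod_normal_density_shift[OF assms, of phi z]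
        prod_normal_density_shift[OF assms, of "- phi" z]
      by (simp add: distrib_left)
  qed
  finally show ?thesis unfolding E_def by (simp add: mult.assoc)
qed

lemma prob_space_std_normal_distribution: "prob_space std_normal_distribution"
  by (rule prob_space_normal_density) simp

interpretation std_normal: prob_space std_normal_distribution
  by (rule prob_space_std_normal_distribution)

lemma integrable_std_normal_ln_density:
  "integrable std_normal_distribution (\<lambda>x. ln (std_normal_density x))"
proof -
  have "integrable std_normal_distribution (\<lambda>x. - (x ^ 2 / 2) - ln (sqrt (2 * pi)))"
    using integrable_std_normal_distribution_moment[of 2]
    by (intro Bochner_Integration.integrable_diff integrable_minus integrable_divide) auto
  then show ?thesis by (simp add: normal_density_def ln_div)
qed

lemma KL_div_std_normal_density_eq:
  assumes [measurable]: "f \<in> borel_measurable borel"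
  shows "KL_div std_normal_density f = (\<integral>y. ln (std_normal_density y / f y) \<partial>std_normal_distribution)"
  unfolding KL_div_def by (subst integral_density) auto

abbreviation iid_std_normal :: "nat \<Rightarrow> (nat \<Rightarrow> real) measure" where
  "iid_std_normal k \<equiv> PiM {..<k} (\<lambda>_. std_normal_distribution)"

interpretation iid_std_normal: prob_space "iid_std_normal k" for k
  by (intro prob_space_PiM prob_space_std_normal_distribution)

interpretation std_normal_product: product_prob_space "\<lambda>_::nat. std_normal_distribution" UNIV
  by (simp add: product_prob_space_def product_prob_space_axioms_def product_sigma_finite_def
      prob_space_imp_sigma_finite prob_space_std_normal_distribution)

lemma integrable_iid_std_normal_component:
  fixes h :: "real \<Rightarrow> real"
  assumes "i < k" and "integrable std_normal_distribution h"
  shows "integrable (iid_std_normal k) (\<lambda>w. h (w i))"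
proof (rule integrable_distr[where T = "\<lambda>w. w i"])
  show "(\<lambda>w. w i) \<in> measurable (iid_std_normal k) std_normal_distribution"
    using assms(1) by simp
  show "integrable (distr (iid_std_normal k) std_normal_distribution (\<lambda>w. w i)) h"
    using assms by (subst distr_PiM_component) (auto intro: prob_space_std_normal_distribution)
qed

lemma integral_iid_std_normal_restrict:
  fixes f :: "(nat \<Rightarrow> real) \<Rightarrow> real"
  assumes "j \<le> k" and [measurable]: "f \<in> borel_measurable (iid_std_normal j)"
  shows "(\<integral>w. f (restrict w {..<j}) \<partial>iid_std_normal k) = integral\<^sup>L (iid_std_normal j) f"
proof -
  have "(\<lambda>w. restrict w {..<j}) \<in> measurable (iid_std_normal k) (iid_std_normal j)"
    using assms(1) by (intro measurable_restrict_subset) auto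
  from integral_distr[OF this assms(2)] show ?thesis
    using assms(1) by (subst std_normal_product.distr_restrict[of "{..<j}" "{..<k}"]) auto
qed

definition marginal_lik :: "(real \<Rightarrow> real) \<Rightarrow> nat \<Rightarrow> (nat \<Rightarrow> real) \<Rightarrow> real" where
  "marginal_lik pri k z = (\<integral>phi. pri phi * (\<Prod>i<k. normal_density phi 1 (z i)) \<partial>lborel)"

lemma marginal_lik_cong:
  "(\<And>i. i < k \<Longrightarrow> z i = z' i) \<Longrightarrow> marginal_lik pri k z = marginal_lik pri k z'"
  unfolding marginal_lik_def by (metis (no_types, lifting) lessThan_iff prod.cong)

lemma pred_dens_eq_marginal_lik:
  "pred_dens pri k z y = marginal_lik pri (Suc k) (z(k := y)) / marginal_lik pri k z"
proof -
  have "(\<Prod>i<Suc k. normal_density phi 1 ((z(k := y)) i))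
      = (\<Prod>i<k. normal_density phi 1 (z i)) * normal_density phi 1 y" for phi
    by (simp add: prod.lessThan_Suc)
  then show ?thesis
    unfolding pred_dens_def marginal_lik_def by (simp add: mult.assoc)
qed

lemma integrable_indicator_comp_mult:
  fixes f :: "'a \<Rightarrow> real"
  assumes "integrable M f" "A \<in> sets borel" "g \<in> borel_measurable M"
  shows "integrable M (\<lambda>x. indicator A (g x) * f x)"
proof (rule Bochner_Integration.integrable_bound[OF assms(1)])
  show "(\<lambda>x. indicator A (g x) * f x) \<in> borel_measurable M"
    using assms by measurable
qed (auto simp: indicator_def)

lemma integral_even_part_le:
  fixes f :: "real \<Rightarrow> real"
  assumes f: "integrable lborel f" "\<And>x. 0 \<le> f x"
    and A: "A \<in> sets borel" "A \<subseteq> {0<..}"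
  shows "(\<integral>x. indicator A x * (f x + f (- x)) \<partial>lborel) \<le> integral\<^sup>L lborel f"
proof -
  have "integrable lborel (\<lambda>x. f (- x))"
    using lborel_integrable_real_affine_iff[of "-1" f 0] f(1) by simp
  then have int: "integrable lborel (\<lambda>x. indicator A x * f x)"
    "integrable lborel (\<lambda>x. indicator A (- x) * f x)"
    "integrable lborel (\<lambda>x. indicator A x * f (- x))"
    using f(1) A(1) by (auto intro: integrable_indicator_comp_mult)
  have "(\<integral>x. indicator A x * (f x + f (- x)) \<partial>lborel)
      = (\<integral>x. indicator A x * f x \<partial>lborel) + (\<integral>x. indicator A x * f (- x) \<partial>lborel)"
    using int by (simp add: distrib_left)
  also have "(\<integral>x. indicator A x * f (- x) \<partial>lborel) = (\<integral>x. indicator A (- x) * f x \<partial>lborel)"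
    using lborel_integral_real_affine[of "-1" "\<lambda>x. indicator A (- x) * f x" 0] by simp
  also have "(\<integral>x. indicator A x * f x \<partial>lborel) + \<dots>
      = (\<integral>x. (indicator A x + indicator A (- x)) * f x \<partial>lborel)"
    using int by (simp add: distrib_right)
  also have "\<dots> \<le> integral\<^sup>L lborel f"
  proof (rule integral_mono)
    show "integrable lborel (\<lambda>x. (indicator A x + indicator A (- x)) * f x)"
      using int by (simp add: distrib_right)
    fix x
    have "\<not> (x \<in> A \<and> - x \<in> A)" using subsetD[OF A(2), of x] subsetD[OF A(2), of "- x"] by auto
    then show "(indicator A x + indicator A (- x)) * f x \<le> f x"
      using f(2)[of x] by (auto simp: indicator_def)
  qed (rule f(1))
  finally show ?thesis .
qed

lemma integral_ge_even_part_bound: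
  fixes f :: "real \<Rightarrow> real"
  assumes f: "integrable lborel f" "\<And>x. 0 \<le> f x"
    and A: "A \<in> sets borel" "A \<subseteq> {0<..}" "emeasure lborel A < \<infinity>"
    and c: "\<And>x. x \<in> A \<Longrightarrow> c \<le> f x + f (- x)"
  shows "measure lborel A * c \<le> integral\<^sup>L lborel f"
proof -
  have "integrable lborel (\<lambda>x. f x + f (- x))"
    using lborel_integrable_real_affine_iff[of "-1" f 0] f(1) by simp
  then have "integrable lborel (\<lambda>x. indicator A x * (f x + f (- x)))"
    using A(1) by (auto intro: integrable_indicator_comp_mult)
  moreover have "integrable lborel (\<lambda>x. indicator A x * c)"
    using A(1,3) by (intro integrable_mult_left integrable_real_indicator) auto
  ultimately have "(\<integral>x. indicator A x * c \<partial>lborel) \<le> (\<integral>x. indicator A x * (f x + f (- x)) \<partial>lborel)"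
    using c by (intro integral_mono) (auto simp: indicator_def)
  also have "\<dots> \<le> integral\<^sup>L lborel f"
    using f A(1,2) by (rule integral_even_part_le)
  finally show ?thesis
    using A by (simp add: measure_def)
qed

lemma borel_measurable_pred_dens:
  assumes [measurable]: "pri \<in> borel_measurable borel"
  shows "pred_dens pri k z \<in> borel_measurable borel"
  unfolding pred_dens_def normal_density_def by measurable

lemma cesaro_risk_eq_sum:
  "cesaro_risk pri 0 n = (1 / real n) *
     (\<Sum>k<n. \<integral>z. KL_div std_normal_density (pred_dens pri k z) \<partial>iid_std_normal k)"
  unfolding cesaro_risk_def by (simp add: sum.atLeast1_atMost_eq)

locale prior_bounded_near_zero =
  fixes pri :: "real \<Rightarrow> real" and b :: "real \<Rightarrow> real"
  assumes measurable_pri[measurable]: "pri \<in> borel_measurable borel"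
    and pri_nonneg: "\<And>phi. 0 \<le> pri phi"
    and pri_minus: "\<And>phi. pri (- phi) = pri phi"
    and integrable_pri: "integrable lborel pri"
    and pri_ge: "\<And>G phi. 1 \<le> G \<Longrightarrow> phi \<noteq> 0 \<Longrightarrow> phi\<^sup>2 \<le> 1 / G \<Longrightarrow> b G \<le> pri phi"
    and b_pos: "\<And>G. 1 \<le> G \<Longrightarrow> 0 < b G"
begin

definition beta :: "nat \<Rightarrow> real" where
  "beta k = b (real k + 1) / sqrt (real k + 1) * exp (- 1 / 2)"

lemma beta_pos: "0 < beta k"
  unfolding beta_def using b_pos[of "real k + 1"] by simp

lemma integrable_pri_mult_lik:
  "integrable lborel (\<lambda>phi. pri phi * (\<Prod>i<k. normal_density phi 1 (z i)))"
proof (rule Bochner_Integration.integrable_bound[OF integrable_pri])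
  show "(\<lambda>phi. pri phi * (\<Prod>i<k. normal_density phi 1 (z i))) \<in> borel_measurable lborel"
    unfolding normal_density_def by measurable
  show "AE phi in lborel. norm (pri phi * (\<Prod>i<k. normal_density phi 1 (z i))) \<le> norm (pri phi)"
  proof (rule AE_I2)
    fix phi
    show "norm (pri phi * (\<Prod>i<k. normal_density phi 1 (z i))) \<le> norm (pri phi)"
      using pri_nonneg[of phi] prod_normal_density_unit_bounds[of phi z "{..<k}"]
      by (simp add: abs_mult mult_left_le)
  qed
qed

lemma marginal_lik_le: "marginal_lik pri k z \<le> integral\<^sup>L lborel pri"
  unfolding marginal_lik_def using pri_nonneg prod_normal_density_unit_bounds
  by (intro integral_mono integrable_pri_mult_lik integrable_pri mult_left_le)

lemma marginal_lik_ge: "beta k * (\<Prod>i<k. std_normal_density (z i)) \<le> marginal_lik pri k z"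
proof -
  define d where "d = 1 / sqrt (real k + 1)"
  define F where "F = (\<Prod>i<k. std_normal_density (z i))"
  let ?f = "\<lambda>phi. pri phi * (\<Prod>i<k. normal_density phi 1 (z i))"
  have d: "0 < d" "d\<^sup>2 = 1 / (real k + 1)" unfolding d_def by (auto simp: power_divide)
  have "b (real k + 1) * (2 * exp (- 1 / 2) * F) \<le> ?f phi + ?f (- phi)" if "phi \<in> {d/2..d}" for phi
  proof -
    have "phi \<noteq> 0" "phi\<^sup>2 \<le> d\<^sup>2" using that d(1) by (auto intro!: power_mono)
    then have phi_sq: "phi\<^sup>2 \<le> 1 / (real k + 1)" using d by simp
    then have b_le: "b (real k + 1) \<le> pri phi" using \<open>phi \<noteq> 0\<close> by (intro pri_ge) auto
    have "phi\<^sup>2 + real k * phi\<^sup>2 \<le> 1"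
      using phi_sq by (simp add: field_simps)
    then have "real k * phi\<^sup>2 \<le> 1"
      using zero_le_power2[of phi] by linarith
    then have "2 * exp (- 1 / 2) * F \<le> 2 * exp (- real k * phi\<^sup>2 / 2) * F"
      unfolding F_def by (intro mult_right_mono prod_nonneg) (auto simp: normal_density_nonneg)
    also have "\<dots> \<le> (\<Prod>i<k. normal_density phi 1 (z i)) + (\<Prod>i<k. normal_density (- phi) 1 (z i))"
      unfolding F_def using prod_normal_density_symmetric_ge[of "{..<k}" phi z] by simp
    finally have "b (real k + 1) * (2 * exp (- 1 / 2) * F)
        \<le> pri phi * ((\<Prod>i<k. normal_density phi 1 (z i)) + (\<Prod>i<k. normal_density (- phi) 1 (z i)))"
      using b_le pri_nonneg[of phi] unfolding F_def
      by (intro mult_mono) (auto simp: prod_nonneg normal_density_nonneg)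
    then show ?thesis by (simp add: pri_minus distrib_left)
  qed
  then have "measure lborel {d/2..d} * (b (real k + 1) * (2 * exp (- 1 / 2) * F)) \<le> integral\<^sup>L lborel ?f"
    using d(1) pri_nonneg prod_normal_density_unit_bounds
    by (intro integral_ge_even_part_bound integrable_pri_mult_lik mult_nonneg_nonneg)
       (auto simp: emeasure_lborel_Icc)
  moreover have "measure lborel {d/2..d} * (b (real k + 1) * (2 * exp (- 1 / 2) * F)) = beta k * F"
  proof -
    have "measure lborel {d/2..d} = d / 2" using d(1) by simp
    then show ?thesis by (simp add: beta_def d_def)
  qed
  ultimately show ?thesis unfolding F_def[symmetric] marginal_lik_def by linarith
qed

lemma marginal_lik_pos: "0 < marginal_lik pri k z"
proof -
  have "0 < beta k * (\<Prod>i<k. std_normal_density (z i))"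
    using beta_pos by (simp add: prod_pos normal_density_pos)
  also note marginal_lik_ge
  finally show ?thesis .
qed


lemma ln_marginal_lik_ge:
  "ln (beta k) + (\<Sum>i<k. ln (std_normal_density (z i))) \<le> ln (marginal_lik pri k z)"
proof -
  define F where "F = (\<Prod>i<k. std_normal_density (z i))"
  have F: "0 < F" unfolding F_def by (simp add: prod_pos normal_density_pos)
  have "(\<Sum>i<k. ln (std_normal_density (z i))) = ln F"
    unfolding F_def by (intro ln_prod[symmetric]) (auto simp: normal_density_def)
  then have "ln (beta k) + (\<Sum>i<k. ln (std_normal_density (z i))) = ln (beta k * F)"
    using beta_pos[of k] F by (simp add: ln_mult)
  also have "\<dots> \<le> ln (marginal_lik pri k z)"
    using beta_pos[of k] F marginal_lik_ge[of k z] marginal_lik_pos[of k z]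
    by (subst ln_le_cancel_iff) (auto simp: F_def)
  finally show ?thesis .
qed

lemma ln_marginal_lik_le: "ln (marginal_lik pri k z) \<le> ln (integral\<^sup>L lborel pri)"
  using marginal_lik_le[of k z] marginal_lik_pos[of k z] by (subst ln_le_cancel_iff) auto

lemma abs_ln_marginal_lik_le:
  "\<bar>ln (marginal_lik pri k z)\<bar>
    \<le> \<bar>ln (integral\<^sup>L lborel pri)\<bar> + \<bar>ln (beta k)\<bar> + (\<Sum>i<k. \<bar>ln (std_normal_density (z i))\<bar>)"
  using ln_marginal_lik_ge[of k z] ln_marginal_lik_le[of k z]
    sum_abs[of "\<lambda>i. ln (std_normal_density (z i))" "{..<k}"]
    sum_nonneg[of "{..<k}" "\<lambda>i. \<bar>ln (std_normal_density (z i))\<bar>"]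
  by (auto simp: abs_le_iff)

lemma measurable_marginal_lik:
  "j \<le> k \<Longrightarrow> marginal_lik pri j \<in> borel_measurable (iid_std_normal k)"
  unfolding marginal_lik_def normal_density_def by measurable

lemma integrable_ln_marginal_lik:
  assumes "j \<le> k"
  shows "integrable (iid_std_normal k) (\<lambda>w. ln (marginal_lik pri j w))"
proof (rule Bochner_Integration.integrable_bound)
  show "integrable (iid_std_normal k) (\<lambda>w. \<bar>ln (integral\<^sup>L lborel pri)\<bar> + \<bar>ln (beta j)\<bar>
      + (\<Sum>i<j. \<bar>ln (std_normal_density (w i))\<bar>))"
    using assms
    by (intro Bochner_Integration.integrable_add Bochner_Integration.integrable_sum
        integrable_abs integrable_iid_std_normal_component integrable_std_normal_ln_density
        iid_std_normal.integrable_const) auto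
  show "(\<lambda>w. ln (marginal_lik pri j w)) \<in> borel_measurable (iid_std_normal k)"
    using measurable_marginal_lik[OF assms] by measurable
qed (use abs_ln_marginal_lik_le order_trans[OF _ abs_ge_self] in auto)

definition pred_log_ratio :: "nat \<Rightarrow> (nat \<Rightarrow> real) \<Rightarrow> real" where
  "pred_log_ratio k w = ln (std_normal_density (w k) / pred_dens pri k w (w k))"

lemma pred_log_ratio_eq:
  "pred_log_ratio k w =
    ln (std_normal_density (w k)) - ln (marginal_lik pri (Suc k) w) + ln (marginal_lik pri k w)"
  using marginal_lik_pos[of "Suc k" w] marginal_lik_pos[of k w] normal_density_pos[of 1 0 "w k"]
  by (simp add: pred_log_ratio_def pred_dens_eq_marginal_lik ln_div ln_mult)

lemma integrable_pred_log_ratio: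
  assumes "k < n"
  shows "integrable (iid_std_normal n) (pred_log_ratio k)"
  unfolding pred_log_ratio_eq[abs_def] using assms
  by (intro Bochner_Integration.integrable_add Bochner_Integration.integrable_diff
      integrable_ln_marginal_lik integrable_iid_std_normal_component
      integrable_std_normal_ln_density) auto

lemma expected_KL_pred_dens:
  "(\<integral>z. KL_div std_normal_density (pred_dens pri k z) \<partial>iid_std_normal k)
    = integral\<^sup>L (iid_std_normal (Suc k)) (pred_log_ratio k)"
proof -
  have "pred_dens pri k (z(k := y)) = pred_dens pri k z" for z y
    by (intro ext) (auto simp: pred_dens_eq_marginal_lik intro!: marginal_lik_cong)
  then have "KL_div std_normal_density (pred_dens pri k z)
      = (\<integral>y. pred_log_ratio k (z(k := y)) \<partial>std_normal_distribution)" for z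
    unfolding pred_log_ratio_def
    by (simp add: KL_div_std_normal_density_eq borel_measurable_pred_dens)
  moreover have "integral\<^sup>L (PiM (insert k {..<k}) (\<lambda>_. std_normal_distribution)) (pred_log_ratio k)
      = (\<integral>z. (\<integral>y. pred_log_ratio k (z(k := y)) \<partial>std_normal_distribution) \<partial>iid_std_normal k)"
    using integrable_pred_log_ratio[of k "Suc k"]
    by (intro std_normal_product.product_integral_insert) (auto simp: lessThan_Suc)
  ultimately show ?thesis by (simp add: lessThan_Suc)
qed

lemma integral_pred_log_ratio_restrict:
  assumes "k < n"
  shows "integral\<^sup>L (iid_std_normal n) (pred_log_ratio k)
    = integral\<^sup>L (iid_std_normal (Suc k)) (pred_log_ratio k)"
proof -
  have "marginal_lik pri j (restrict w {..<Suc k}) = marginal_lik pri j w" if "j \<le> Suc k" for j w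
    using that by (intro marginal_lik_cong) auto
  then have "pred_log_ratio k (restrict w {..<Suc k}) = pred_log_ratio k w" for w
    by (simp add: pred_log_ratio_eq)
  then have "integral\<^sup>L (iid_std_normal n) (pred_log_ratio k)
      = (\<integral>w. pred_log_ratio k (restrict w {..<Suc k}) \<partial>iid_std_normal n)"
    by simp
  also have "\<dots> = integral\<^sup>L (iid_std_normal (Suc k)) (pred_log_ratio k)"
    using assms integrable_pred_log_ratio[of k "Suc k"]
    by (intro integral_iid_std_normal_restrict) auto
  finally show ?thesis .
qed

lemma sum_pred_log_ratio_le:
  "(\<Sum>k<n. pred_log_ratio k w) \<le> ln (integral\<^sup>L lborel pri) - ln (beta n)"
proof -
  \<comment> \<open>the chain rule: the log predictive ratios telescope\<close>
  have "(\<Sum>k<n. pred_log_ratio k w) = (\<Sum>k<n. ln (std_normal_density (w k)))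
      - ln (marginal_lik pri n w) + ln (marginal_lik pri 0 w)"
    unfolding pred_log_ratio_eq
    using sum_lessThan_telescope'[of "\<lambda>k. ln (marginal_lik pri k w)" n]
    by (simp add: sum.distrib sum_subtractf)
  also have "\<dots> \<le> ln (integral\<^sup>L lborel pri) - ln (beta n)"
    using ln_marginal_lik_ge[of n w] by (simp add: marginal_lik_def)
  finally show ?thesis .
qed

lemma cesaro_risk_le:
  assumes "0 < n"
  shows "cesaro_risk pri 0 n \<le> (ln (integral\<^sup>L lborel pri) - ln (beta n)) / real n"
proof -
  have "(\<Sum>k<n. \<integral>z. KL_div std_normal_density (pred_dens pri k z) \<partial>iid_std_normal k)
      = (\<Sum>k<n. integral\<^sup>L (iid_std_normal n) (pred_log_ratio k))"
    by (intro sum.cong refl) (simp add: expected_KL_pred_dens integral_pred_log_ratio_restrict[symmetric])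
  also have "\<dots> = (\<integral>w. (\<Sum>k<n. pred_log_ratio k w) \<partial>iid_std_normal n)"
    by (intro Bochner_Integration.integral_sum[symmetric] integrable_pred_log_ratio) auto
  also have "\<dots> \<le> (\<integral>w. ln (integral\<^sup>L lborel pri) - ln (beta n) \<partial>iid_std_normal n)"
    by (intro integral_mono Bochner_Integration.integrable_sum integrable_pred_log_ratio
        iid_std_normal.integrable_const sum_pred_log_ratio_le) auto
  also have "\<dots> = ln (integral\<^sup>L lborel pri) - ln (beta n)"
    using iid_std_normal.prob_space[of n] by simp
  finally show ?thesis
    unfolding cesaro_risk_eq_sum using assms by (simp add: divide_right_mono)
qed

end

lemma ln_sum_squares_le:
  fixes L c a :: real
  assumes "0 \<le> L" "0 < c" "0 < a"
  shows "ln (L\<^sup>2 + c\<^sup>2) \<le> a * (L + c) + 2 * ln (2 / a)"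
proof -
  have "L\<^sup>2 + c\<^sup>2 \<le> (L + c)\<^sup>2"
    using assms mult_nonneg_nonneg[of L c] by (simp add: power2_sum)
  then have "ln (L\<^sup>2 + c\<^sup>2) \<le> ln ((L + c)\<^sup>2)"
    using assms by (subst ln_le_cancel_iff) (auto simp: add_nonneg_pos)
  also have "\<dots> = 2 * ln (L + c)"
    using assms by (simp add: ln_realpow)
  also have "ln (L + c) = ln ((L + c) * (a / 2)) + ln (2 / a)"
    using assms by (simp add: ln_mult ln_div)
  also have "ln ((L + c) * (a / 2)) \<le> (L + c) * (a / 2) - 1"
    using assms by (intro ln_le_minus_one) auto
  finally have "ln (L\<^sup>2 + c\<^sup>2) \<le> 2 * ((L + c) * (a / 2) - 1) + 2 * ln (2 / a)"
    by simp
  then show ?thesis by (simp add: field_simps)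
qed

locale log_cauchy_prior =
  fixes c :: real
  assumes c_pos: "0 < c"
begin

sublocale prior_bounded_near_zero "scale_mix_prior (log_cauchy_density c)"
  "\<lambda>G. c / (2 * pi * sqrt (2 * pi) * exp 1) * sqrt G / ((ln (2 * G))\<^sup>2 + c\<^sup>2)"
proof
  have [measurable]: "log_cauchy_density c \<in> borel_measurable borel"
    unfolding log_cauchy_density_def by measurable
  note dens = set_integrable_log_cauchy_density[OF c_pos] log_cauchy_density_nonneg[OF c_pos]
  show "scale_mix_prior (log_cauchy_density c) \<in> borel_measurable borel" by measurable
  show "0 \<le> scale_mix_prior (log_cauchy_density c) phi" for phi
    by (rule scale_mix_prior_nonneg[OF dens(2)])
  show "scale_mix_prior (log_cauchy_density c) (- phi) = scale_mix_prior (log_cauchy_density c) phi"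
    for phi
    by (rule scale_mix_prior_minus)
  show "integrable lborel (scale_mix_prior (log_cauchy_density c))"
    using dens by (intro integrable_scale_mix_prior) auto
  show "0 < c / (2 * pi * sqrt (2 * pi) * exp 1) * sqrt G / ((ln (2 * G))\<^sup>2 + c\<^sup>2)"
    if "1 \<le> G" for G
    using c_pos that by (simp add: add_nonneg_pos)
  fix G phi :: real
  assume G: "1 \<le> G" and phi: "phi \<noteq> 0" "phi\<^sup>2 \<le> 1 / G"
  define D where "D = (ln (2 * G))\<^sup>2 + c\<^sup>2"
  have "D > 0" unfolding D_def using c_pos by (simp add: add_nonneg_pos)
  have "G * ((c / pi) / (2 * G * D)) * (sqrt G / sqrt (2 * pi) * exp (- 1))
      \<le> scale_mix_prior (log_cauchy_density c) phi"
    unfolding D_def using G phi dens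
    by (intro scale_mix_prior_ge log_cauchy_density_ge[OF c_pos G]) auto
  also have "G * ((c / pi) / (2 * G * D)) * (sqrt G / sqrt (2 * pi) * exp (- 1))
      = c / (2 * pi * sqrt (2 * pi) * exp 1) * sqrt G / D"
    using G \<open>D > 0\<close> by (simp add: exp_minus field_simps)
  finally show "c / (2 * pi * sqrt (2 * pi) * exp 1) * sqrt G / ((ln (2 * G))\<^sup>2 + c\<^sup>2)
      \<le> scale_mix_prior (log_cauchy_density c) phi"
    unfolding D_def .
qed

lemma ln_beta_ge:
  assumes "a > 0" and "n \<ge> 1"
  shows "ln (beta n) \<ge> ln (c / (2 * pi * sqrt (2 * pi) * exp 1) * exp (- 1 / 2))
    - a * ln (real n) - (a * (ln 4 + c) + 2 * ln (2 / a))"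
proof -
  define K where "K = c / (2 * pi * sqrt (2 * pi) * exp 1) * exp (- 1 / 2)"
  define L where "L = ln (2 * (real n + 1))"
  define D where "D = L\<^sup>2 + c\<^sup>2"
  have "L \<le> ln (4 * real n)"
    unfolding L_def using assms(2) by simp
  then have L: "0 \<le> L" "L \<le> ln 4 + ln (real n)"
    using assms(2) by (auto simp: L_def ln_mult)
  have "D > 0" "K > 0" using c_pos by (simp_all add: D_def K_def add_nonneg_pos)
  then have "beta n = K / D"
    unfolding beta_def K_def L_def[symmetric] D_def[symmetric] by (simp add: field_simps)
  then have "ln (beta n) = ln K - ln D"
    using \<open>D > 0\<close> \<open>K > 0\<close> by (simp add: ln_div)
  moreover have "ln D \<le> a * ln (real n) + (a * (ln 4 + c) + 2 * ln (2 / a))"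
    using ln_sum_squares_le[OF L(1) c_pos assms(1)] mult_left_mono[OF L(2), of a] assms(1)
    by (simp add: D_def algebra_simps)
  ultimately show ?thesis unfolding K_def by linarith
qed

lemma ex_cesaro_risk_le:
  assumes "a > 0"
  shows "\<exists>B. \<forall>n::nat. n \<ge> 1 \<longrightarrow>
    cesaro_risk (scale_mix_prior (log_cauchy_density c)) 0 n \<le> (a * ln (real n) + B) / real n"
proof (intro exI allI impI)
  fix n :: nat assume "n \<ge> 1"
  let ?B = "ln (integral\<^sup>L lborel (scale_mix_prior (log_cauchy_density c)))
    - ln (c / (2 * pi * sqrt (2 * pi) * exp 1) * exp (- 1 / 2)) + (a * (ln 4 + c) + 2 * ln (2 / a))"
  have "ln (integral\<^sup>L lborel (scale_mix_prior (log_cauchy_density c))) - ln (beta n)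
      \<le> a * ln (real n) + ?B"
    using ln_beta_ge[OF assms \<open>n \<ge> 1\<close>] by linarith
  then have "(ln (integral\<^sup>L lborel (scale_mix_prior (log_cauchy_density c))) - ln (beta n)) / real n
      \<le> (a * ln (real n) + ?B) / real n"
    by (simp add: divide_right_mono)
  with cesaro_risk_le[of n] \<open>n \<ge> 1\<close>
  show "cesaro_risk (scale_mix_prior (log_cauchy_density c)) 0 n \<le> (a * ln (real n) + ?B) / real n"
    by simp
qed

end

theorem theorem3:
  fixes pri :: "real \<Rightarrow> real" and a :: real
  assumes "pri = hths_prior \<or> pri = hths_plus_prior"
    and "a > 0"
  shows "\<exists>C > 0. \<forall>n::nat. n \<ge> 1 \<longrightarrow>
           cesaro_risk pri 0 n \<le> a * ln (real n) / real n + (1 / real n) * (1 + 1 / (a * C))"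
proof -
  obtain c where c: "c > 0" and pri: "pri = scale_mix_prior (log_cauchy_density c)"
    using assms(1) pi_gt_zero
    unfolding hths_prior_def hths_plus_prior_def hths_gamma_dens_eq hths_plus_gamma_dens_eq
    by (metis mult_pos_pos zero_less_numeral)
  interpret log_cauchy_prior c
    using c by unfold_locales
  obtain B where B: "\<And>n::nat. n \<ge> 1 \<Longrightarrow> cesaro_risk pri 0 n \<le> (a * ln (real n) + B) / real n"
    using ex_cesaro_risk_le[OF assms(2)] unfolding pri by blast
  define C where "C = 1 / (a * (\<bar>B\<bar> + 1))"
  have "C > 0" and "1 / (a * C) = \<bar>B\<bar> + 1"
    using assms(2) by (simp_all add: C_def add_pos_nonneg)
  moreover have "(a * ln (real n) + B) / real n \<le> a * ln (real n) / real n + (1 / real n) * (2 + \<bar>B\<bar>)"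
    for n :: nat
    using divide_right_mono[of B "2 + \<bar>B\<bar>" "real n"] by (simp add: add_divide_distrib)
  ultimately show ?thesis
    using B by (intro exI[of _ C]) (auto intro: order_trans)
qed

end
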